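(* Let $R=R_A\,\dot\cup\,R_D$ be a finite set of $n=|R|$ resources partitioned into those of an attacker $A$ and those of all other entities $D$, and let $r=|R_A|/|R_D|$. Suppose each resource is online independently with probability $\rho$ (the steady state). Let $\phi_R$ be the random variable equal to the number of online resources in $R_A$ divided by the number of online resources in $R_D$. Then for every $\alpha\in(0,1/2)$, $$\Pr\left[\phi_R \ge \left(1+\frac{2\alpha}{1-\alpha}\right) r\right] < \left(\frac{e^{\alpha}}{(1+\alpha)^{1+\alpha}}\right)^{\rho n r/(1+r)} + \left(\frac{e^{-\alpha}}{(1-\alpha)^{1-\alpha}}\right)^{\rho n/(1+r)}.$$
   Context: In the steady state, each resource's online/offline status follows the stationary distribution of a two-state Markov chain with failure probability $p$ and recovery probability $q$, so it is online with probability $\rho=q/(p+q)$, independently of all other resources. *)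

theory Defs
  imports "HOL-Probability.Probability"
begin

definition steady_state :: "'a set \<Rightarrow> real \<Rightarrow> ('a \<Rightarrow> bool) pmf" where
  "steady_state R rho = Pi_pmf R False (\<lambda>_. bernoulli_pmf rho)"

definition online_count :: "'a set \<Rightarrow> ('a \<Rightarrow> bool) \<Rightarrow> nat" where
  "online_count S omega = card {x \<in> S. omega x}"

text \<open>phi_R: online resources of the attacker divided by online resources of the
  others, as an extended real; when no resource of R_D is online the ratio is
  taken to be +infinity (conservative convention).\<close>
definition phi :: "'a set \<Rightarrow> 'a set \<Rightarrow> ('a \<Rightarrow> bool) \<Rightarrow> ereal" where
  "phi RA RD omega =
     (if online_count RD omega = 0 then \<infinity>
      else ereal (real (online_count RA omega) / real (online_count RD omega)))"

end

theory Submission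
  imports Defs
begin

text \<open>Since \<open>1 + 2\<alpha>/(1 - \<alpha>) = (1 + \<alpha>)/(1 - \<alpha>)\<close>, the event \<open>\<phi>\<^sub>R \<ge> (1 + 2\<alpha>/(1 - \<alpha>)) r\<close>
  forces either at least \<open>(1 + \<alpha>) \<rho> |R\<^sub>A|\<close> online attacker resources or at most
  \<open>(1 - \<alpha>) \<rho> |R\<^sub>D|\<close> online resources of the others. Both tails obey the multiplicative
  Chernoff bounds: apply Markov's inequality to \<open>c ^ N\<close> with \<open>c = 1 \<plusminus> \<alpha>\<close>; its expectation
  \<open>(1 + \<rho> (c - 1)) ^ |S|\<close> factorises over the independent resources and is at most
  \<open>exp (\<rho> (c - 1) |S|)\<close>. A union bound finishes. Strictness comes from \<open>1 + x < exp x\<close>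
  for \<open>x \<noteq> 0\<close>, except when the upper-tail bound is trivially \<open>1\<close>.\<close>

lemma finite_set_pmf_steady_state:
  assumes "finite R"
  shows "finite (set_pmf (steady_state R rho))"
proof (rule finite_subset)
  show "set_pmf (steady_state R rho) \<subseteq> PiE_dflt R False (\<lambda>_. UNIV)"
    unfolding steady_state_def using assms by (auto simp: set_Pi_pmf PiE_dflt_def)
  show "finite (PiE_dflt R False (\<lambda>_. (UNIV :: bool set)))"
    using assms by (intro finite_PiE_dflt) auto
qed

lemma expectation_power_online_count:
  assumes "finite R" "S \<subseteq> R" "0 \<le> rho" "rho \<le> 1" "0 \<le> c"
  shows "measure_pmf.expectation (steady_state R rho) (\<lambda>omega. c ^ online_count S omega)
    = (1 + rho * (c - 1)) ^ card S"
proof -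
  define f where "f x v = (if x \<in> S \<and> v then c else 1)" for x and v :: bool
  have "c ^ online_count S omega = (\<Prod>x\<in>R. f x (omega x))" for omega
  proof -
    have "(\<Prod>x\<in>R. f x (omega x)) = (\<Prod>x\<in>{x \<in> S. omega x}. c)"
      using assms by (intro prod.mono_neutral_cong_right) (auto simp: f_def)
    thus ?thesis by (simp add: online_count_def)
  qed
  hence "measure_pmf.expectation (steady_state R rho) (\<lambda>omega. c ^ online_count S omega)
      = measure_pmf.expectation (Pi_pmf R False (\<lambda>_. bernoulli_pmf rho))
          (\<lambda>omega. \<Prod>x\<in>R. f x (omega x))"
    by (simp add: steady_state_def)
  also have "\<dots> = (\<Prod>x\<in>R. measure_pmf.expectation (bernoulli_pmf rho) (f x))"
    using assms(1,5)
    by (intro expectation_prod_Pi_pmf) (auto simp: f_def integrable_measure_pmf_finite)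
  also have "\<dots> = (\<Prod>x\<in>R. if x \<in> S then 1 + rho * (c - 1) else 1)"
    using assms by (intro prod.cong) (auto simp: f_def algebra_simps)
  also have "\<dots> = (1 + rho * (c - 1)) ^ card S"
    using assms by (simp add: prod.If_cases Int_absorb1)
  finally show ?thesis .
qed

lemma one_plus_power_le_exp:
  fixes x :: real
  assumes "-1 \<le> x"
  shows "(1 + x) ^ k \<le> exp (x * k)"
proof -
  have "(1 + x) ^ k \<le> exp x ^ k"
    using assms by (intro power_mono) auto
  thus ?thesis by (simp add: exp_of_nat2_mult)
qed

lemma one_plus_power_less_exp:
  fixes x :: real
  assumes "-1 \<le> x" "x \<noteq> 0" "0 < k"
  shows "(1 + x) ^ k < exp (x * k)"
proof -
  have "1 + x < exp x"
    using exp_minus_greater[of "-x"] assms(2) by simp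
  hence "(1 + x) ^ k < exp x ^ k"
    using assms by (intro power_strict_mono) auto
  thus ?thesis by (simp add: exp_of_nat2_mult)
qed

lemma exp_divide_powr_powr:
  fixes c s :: real
  assumes "0 < c"
  shows "(exp (c - 1) / c powr c) powr s = exp ((c - 1) * s) / c powr (c * s)"
  using assms by (simp add: powr_divide powr_powr exp_powr_real)

lemma chernoff_online_count:
  assumes "finite R" "S \<subseteq> R" "0 \<le> rho" "rho \<le> 1" "0 < c"
  defines "P \<equiv> measure_pmf.prob (steady_state R rho)
      {omega. c powr (c * (rho * card S)) \<le> c ^ online_count S omega}"
    and "B \<equiv> (exp (c - 1) / c powr c) powr (rho * card S)"
  shows "P \<le> B"
    and "0 < rho \<Longrightarrow> S \<noteq> {} \<Longrightarrow> c \<noteq> 1 \<Longrightarrow> P < B"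
proof -
  let ?t = "c * (rho * card S)" and ?x = "rho * (c - 1)"
  have markov: "P \<le> (1 + ?x) ^ card S / c powr ?t"
    unfolding P_def
    using integral_Markov_inequality_measure[where M = "measure_pmf (steady_state R rho)"
        and u = "\<lambda>omega. c ^ online_count S omega" and A = "{}" and c = "c powr ?t"]
      finite_set_pmf_steady_state[OF assms(1)]
      expectation_power_online_count[OF assms(1-4) less_imp_le[OF assms(5)]] assms(5)
    by (simp add: integrable_measure_pmf_finite)
  have x: "-1 \<le> ?x"
    unfolding right_diff_distrib using assms(3-5) mult_nonneg_nonneg[of rho c] by linarith
  have B: "B = exp (?x * card S) / c powr ?t"
    unfolding B_def exp_divide_powr_powr[OF assms(5)] by (simp add: ac_simps)
  show "P \<le> B"
    unfolding B using markov one_plus_power_le_exp[OF x, of "card S"] assms(5)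
    by (meson divide_right_mono order_trans powr_ge_zero)
  assume "0 < rho" "S \<noteq> {}" "c \<noteq> 1"
  hence "(1 + ?x) ^ card S < exp (?x * card S)"
    using assms(1,2) x by (intro one_plus_power_less_exp) (auto simp: card_gt_0_iff finite_subset)
  thus "P < B"
    unfolding B using markov assms(5) by (smt (verit) divide_strict_right_mono powr_gt_zero)
qed

lemma upper_tail_online_count:
  assumes "finite R" "S \<subseteq> R" "0 < rho" "rho \<le> 1" "S \<noteq> {}" "0 < alpha"
  shows "measure_pmf.prob (steady_state R rho)
      {omega. (1 + alpha) * rho * card S \<le> real (online_count S omega)}
    < (exp alpha / (1 + alpha) powr (1 + alpha)) powr (rho * card S)"
proof -
  let ?c = "1 + alpha"
  have "{omega. ?c * rho * card S \<le> real (online_count S omega)}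
      \<subseteq> {omega. ?c powr (?c * (rho * card S)) \<le> ?c ^ online_count S omega}"
    using assms(6) by (auto simp: powr_realpow[symmetric] mult.assoc intro: powr_mono)
  hence "measure_pmf.prob (steady_state R rho)
        {omega. ?c * rho * card S \<le> real (online_count S omega)}
      \<le> measure_pmf.prob (steady_state R rho)
          {omega. ?c powr (?c * (rho * card S)) \<le> ?c ^ online_count S omega}"
    by (intro measure_pmf.finite_measure_mono) auto
  also have "\<dots> < (exp (?c - 1) / ?c powr ?c) powr (rho * card S)"
    using assms by (intro chernoff_online_count(2)) auto
  finally show ?thesis by simp
qed

lemma lower_tail_online_count:
  assumes "finite R" "S \<subseteq> R" "0 \<le> rho" "rho \<le> 1" "0 < alpha" "alpha < 1"
  shows "measure_pmf.prob (steady_state R rho)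
      {omega. real (online_count S omega) \<le> (1 - alpha) * rho * card S}
    \<le> (exp (- alpha) / (1 - alpha) powr (1 - alpha)) powr (rho * card S)"
proof -
  let ?c = "1 - alpha"
  have "{omega. real (online_count S omega) \<le> ?c * rho * card S}
      \<subseteq> {omega. ?c powr (?c * (rho * card S)) \<le> ?c ^ online_count S omega}"
    using assms(5,6) by (auto simp: powr_realpow[symmetric] mult.assoc intro: powr_mono')
  hence "measure_pmf.prob (steady_state R rho)
        {omega. real (online_count S omega) \<le> ?c * rho * card S}
      \<le> measure_pmf.prob (steady_state R rho)
          {omega. ?c powr (?c * (rho * card S)) \<le> ?c ^ online_count S omega}"
    by (intro measure_pmf.finite_measure_mono) auto
  also have "\<dots> \<le> (exp (?c - 1) / ?c powr ?c) powr (rho * card S)"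
    using assms by (intro chernoff_online_count(1)) auto
  finally show ?thesis by simp
qed

lemma divide_less_of_relative_deviation:
  fixes a d xa xd rho alpha :: real
  assumes "0 < d" "0 \<le> a" "0 < alpha" "alpha < 1" "0 \<le> rho" "0 \<le> xa"
    and "xa < (1 + alpha) * rho * a" "(1 - alpha) * rho * d < xd"
  shows "xa / xd < (1 + 2 * alpha / (1 - alpha)) * (a / d)"
proof -
  have xd: "0 < xd"
    using assms(1,4,5,8) by (smt (verit) mult_nonneg_nonneg)
  have "(1 - alpha) * d * xa < (1 - alpha) * d * ((1 + alpha) * rho * a)"
    using assms by (intro mult_strict_left_mono) auto
  also have "\<dots> \<le> (1 + alpha) * a * xd"
    using mult_left_mono[OF less_imp_le[OF assms(8)], of "(1 + alpha) * a"] assms(2,3)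
    by (simp add: ac_simps)
  finally have "(1 - alpha) * d * xa < (1 + alpha) * a * xd" .
  moreover have "1 + 2 * alpha / (1 - alpha) = (1 + alpha) / (1 - alpha)"
    using assms(4) by (simp add: field_simps)
  ultimately show ?thesis
    using assms(1,4) xd by (simp add: field_simps)
qed

lemma tail_event_of_phi_ge:
  fixes rho alpha :: real
  assumes "finite RD" "RD \<noteq> {}" "0 < alpha" "alpha < 1" "0 \<le> rho"
    and "ereal ((1 + 2 * alpha / (1 - alpha)) * (card RA / card RD)) \<le> phi RA RD omega"
  shows "(1 + alpha) * rho * card RA \<le> real (online_count RA omega)
    \<or> real (online_count RD omega) \<le> (1 - alpha) * rho * card RD"
proof (rule ccontr)
  assume "\<not> ?thesis"
  hence upper: "real (online_count RA omega) < (1 + alpha) * rho * card RA"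
    and lower: "(1 - alpha) * rho * card RD < real (online_count RD omega)"
    by auto
  have "online_count RD omega \<noteq> 0"
    using lower assms(4,5) by (smt (verit) mult_nonneg_nonneg of_nat_0 of_nat_0_le_iff)
  moreover have "real (online_count RA omega) / real (online_count RD omega)
      < (1 + 2 * alpha / (1 - alpha)) * (card RA / card RD)"
    using assms upper lower
    by (intro divide_less_of_relative_deviation) (auto simp: card_gt_0_iff)
  ultimately show False
    using assms(6) by (simp add: phi_def)
qed

lemma prob_phi_ge_less_chernoff_bounds:
  fixes rho alpha :: real
  assumes "finite R" "RA \<subseteq> R" "RD \<subseteq> R" "RD \<noteq> {}"
    and "0 \<le> rho" "rho \<le> 1" "0 < alpha" "alpha < 1"
  shows "measure_pmf.prob (steady_state R rho)
      {omega. ereal ((1 + 2 * alpha / (1 - alpha)) * (card RA / card RD)) \<le> phi RA RD omega}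
    < (exp alpha / (1 + alpha) powr (1 + alpha)) powr (rho * card RA)
      + (exp (- alpha) / (1 - alpha) powr (1 - alpha)) powr (rho * card RD)"
    (is "_ < ?B1 + ?B2")
proof -
  let ?M = "measure_pmf.prob (steady_state R rho)"
  let ?E = "{omega. ereal ((1 + 2 * alpha / (1 - alpha)) * (card RA / card RD))
    \<le> phi RA RD omega}"
  let ?E1 = "{omega. (1 + alpha) * rho * card RA \<le> real (online_count RA omega)}"
  let ?E2 = "{omega. real (online_count RD omega) \<le> (1 - alpha) * rho * card RD}"
  have fin: "finite RD" using assms(1,3) by (rule finite_subset[rotated])
  have "?E \<subseteq> ?E1 \<union> ?E2"
    using assms tail_event_of_phi_ge[OF fin, of alpha rho RA] by auto
  hence "?M ?E \<le> ?M (?E1 \<union> ?E2)"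
    by (rule measure_pmf.finite_measure_mono) auto
  also have "\<dots> \<le> ?M ?E1 + ?M ?E2"
    by (rule measure_Un_le) auto
  finally have union_bound: "?M ?E \<le> ?M ?E1 + ?M ?E2" .
  have "?M ?E2 \<le> ?B2"
    using assms by (intro lower_tail_online_count) auto
  moreover have "?M ?E1 < ?B1 \<or> ?B1 = 1"
    using upper_tail_online_count[of R RA rho alpha] assms by (cases "rho = 0 \<or> RA = {}") auto
  moreover have "?M ?E \<le> 1" "0 < ?B2"
    using assms by auto
  ultimately show ?thesis
    using union_bound by linarith
qed

theorem lemma1:
  fixes RA RD :: "'a set" and rho alpha :: real
  assumes "finite RA" and "finite RD" and "RA \<inter> RD = {}" and "RD \<noteq> {}"
    and "0 \<le> rho" and "rho \<le> 1"
    and "0 < alpha" and "alpha < 1/2"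
  shows "let R = RA \<union> RD; n = real (card R); r = real (card RA) / real (card RD) in
    measure_pmf.prob (steady_state R rho)
       {omega. phi RA RD omega \<ge> ereal ((1 + 2 * alpha / (1 - alpha)) * r)}
    < (exp alpha / (1 + alpha) powr (1 + alpha)) powr (rho * n * r / (1 + r))
      + (exp (- alpha) / (1 - alpha) powr (1 - alpha)) powr (rho * n / (1 + r))"
proof -
  define a d where "a = real (card RA)" and "d = real (card RD)"
  have "0 < d" using assms(2,4) by (simp add: d_def card_gt_0_iff)
  have "1 + a / d = (a + d) / d" "0 < a + d"
    using \<open>0 < d\<close> by (auto simp: a_def field_simps add_nonneg_pos)
  hence exponents: "rho * (a + d) * (a / d) / (1 + a / d) = rho * a"
      "rho * (a + d) / (1 + a / d) = rho * d"
    using \<open>0 < d\<close> by auto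
  have n: "real (card (RA \<union> RD)) = a + d"
    using assms(1-3) by (simp add: a_def d_def card_Un_disjoint)
  show ?thesis
    using prob_phi_ge_less_chernoff_bounds[of "RA \<union> RD" RA RD rho alpha] assms
    unfolding Let_def n a_def[symmetric] d_def[symmetric] exponents by auto
qed

end
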